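(* Let $A=(a_i^j)$ and $B=(b_i^j)$ be $n\times n$ matrices with all entries in $\{0,1\}$, such that for some $r\in\{1,\dots,n-1\}$, $a_i^j=b_i^j=0$ whenever $j-i\ne r$. Let $\xi>0$. If there exists an invertible matrix $C$ with $\|C\|,\|C^{-1}\|\le\xi$ and $\|AC-CB\|=\varepsilon<\frac{1}{n!\,\xi^n}$, then $\mathrm{rank}\,A=\mathrm{rank}\,B$.
   Context: $\|\cdot\|$ is the operator norm on $n\times n$ complex matrices; $a_i^j$ is the entry in row $i$, column $j$. *)

theory Defs
  imports "Jordan_Normal_Form.DL_Rank" Complex_Main
begin

definition vec_l2_norm :: "complex vec \<Rightarrow> real" where
  "vec_l2_norm v = sqrt (\<Sum>i<dim_vec v. (cmod (v $ i))^2)"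

definition op_norm :: "complex mat \<Rightarrow> real" where
  "op_norm M = Sup {vec_l2_norm (M *\<^sub>v v) | v. v \<in> carrier_vec (dim_col M) \<and> vec_l2_norm v \<le> 1}"

end

theory Submission
  imports Defs "HOL-Analysis.L2_Norm"
begin

(* If rank B < rank A, the nonzero columns of the partial permutation matrix A index a coordinate
   subspace of dimension at least rank A > rank B on which A is an isometry. So it contains a vector
   w \<noteq> 0 with B (C^-1 w) = 0, and then (AC - CB) C^-1 w = A w gives |w| \<le> ||AC - CB|| ||C^-1|| |w|.
   The case rank A < rank B is symmetric, with A C in place of B C^-1. Hence the ranks agree as soon
   as ||AC - CB|| ||C^-1|| < 1, which the hypothesis implies because ||C|| ||C^-1|| \<ge> 1 forces
   \<xi> \<ge> 1. *)

section \<open>Euclidean and operator norms\<close>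

lemma vec_l2_norm_eq_L2_set: "vec_l2_norm v = L2_set (\<lambda>i. cmod (v $ i)) {..<dim_vec v}"
  unfolding vec_l2_norm_def L2_set_def ..

lemma vec_l2_norm_nonneg: "0 \<le> vec_l2_norm v"
  unfolding vec_l2_norm_eq_L2_set by (rule L2_set_nonneg)

lemma vec_l2_norm_eq_0_iff:
  assumes "v \<in> carrier_vec n"
  shows "vec_l2_norm v = 0 \<longleftrightarrow> v = 0\<^sub>v n"
  using assms unfolding vec_l2_norm_eq_L2_set by (auto simp: L2_set_eq_0_iff vec_eq_iff)

lemma vec_l2_norm_pos:
  assumes "v \<in> carrier_vec n" and "v \<noteq> 0\<^sub>v n"
  shows "0 < vec_l2_norm v"
  using assms vec_l2_norm_eq_0_iff vec_l2_norm_nonneg by (metis order_le_less)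

lemma vec_l2_norm_smult: "vec_l2_norm (a \<cdot>\<^sub>v v) = cmod a * vec_l2_norm v"
  unfolding vec_l2_norm_eq_L2_set
  by (subst L2_set_right_distrib) (auto simp: norm_mult intro!: L2_set_cong)

lemma vec_l2_norm_uminus: "vec_l2_norm (- v) = vec_l2_norm v"
  unfolding vec_l2_norm_def by simp

lemma vec_l2_norm_unit_vec:
  assumes "i < n"
  shows "vec_l2_norm (unit_vec n i) = 1"
proof -
  have "(\<Sum>k<n. (cmod (unit_vec n i $ k))\<^sup>2) = (\<Sum>k<n. if k = i then 1 else 0)"
    by (rule sum.cong) (auto simp: unit_vec_def)
  then show ?thesis
    using assms unfolding vec_l2_norm_def by simp
qed

lemma vec_l2_norm_mult_mat_vec_le_entry_sum:
  assumes v: "v \<in> carrier_vec (dim_col M)"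
  shows "vec_l2_norm (M *\<^sub>v v)
           \<le> (\<Sum>i<dim_row M. \<Sum>j<dim_col M. cmod (M $$ (i, j))) * vec_l2_norm v"
proof -
  have entry: "cmod ((M *\<^sub>v v) $ i) \<le> (\<Sum>j<dim_col M. cmod (M $$ (i, j))) * vec_l2_norm v"
    if i: "i < dim_row M" for i
  proof -
    have "(M *\<^sub>v v) $ i = (\<Sum>j<dim_col M. M $$ (i, j) * v $ j)"
      using i v by (simp add: scalar_prod_def lessThan_atLeast0)
    then have "cmod ((M *\<^sub>v v) $ i) \<le> (\<Sum>j<dim_col M. cmod (M $$ (i, j) * v $ j))"
      by (simp add: norm_sum)
    also have "\<dots> = (\<Sum>j<dim_col M. cmod (M $$ (i, j)) * cmod (v $ j))"
      by (simp add: norm_mult)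
    also have "\<dots> \<le> (\<Sum>j<dim_col M. cmod (M $$ (i, j)) * vec_l2_norm v)"
      using v unfolding vec_l2_norm_eq_L2_set
      by (intro sum_mono mult_left_mono member_le_L2_set) auto
    finally show ?thesis
      by (simp add: sum_distrib_right)
  qed
  have "vec_l2_norm (M *\<^sub>v v) \<le> (\<Sum>i<dim_row M. cmod ((M *\<^sub>v v) $ i))"
    unfolding vec_l2_norm_eq_L2_set dim_mult_mat_vec by (rule L2_set_le_sum) simp
  also have "\<dots> \<le> (\<Sum>i<dim_row M. (\<Sum>j<dim_col M. cmod (M $$ (i, j))) * vec_l2_norm v)"
    by (intro sum_mono entry) simp
  finally show ?thesis
    by (simp add: sum_distrib_right)
qed

lemma bdd_above_op_norm_set:
  "bdd_above {vec_l2_norm (M *\<^sub>v v) | v. v \<in> carrier_vec (dim_col M) \<and> vec_l2_norm v \<le> 1}"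
proof (rule bdd_aboveI, safe)
  let ?c = "\<Sum>i<dim_row M. \<Sum>j<dim_col M. cmod (M $$ (i, j))"
  fix v :: "complex vec"
  assume v: "v \<in> carrier_vec (dim_col M)" "vec_l2_norm v \<le> 1"
  have "vec_l2_norm (M *\<^sub>v v) \<le> ?c * vec_l2_norm v"
    by (rule vec_l2_norm_mult_mat_vec_le_entry_sum[OF v(1)])
  also have "\<dots> \<le> ?c"
    using v(2) by (intro mult_left_le sum_nonneg) auto
  finally show "vec_l2_norm (M *\<^sub>v v) \<le> ?c" .
qed

lemma vec_l2_norm_mult_mat_vec_le_op_norm_unit:
  assumes "v \<in> carrier_vec (dim_col M)" and "vec_l2_norm v \<le> 1"
  shows "vec_l2_norm (M *\<^sub>v v) \<le> op_norm M"
  unfolding op_norm_def using assms by (intro cSup_upper bdd_above_op_norm_set) blast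

lemma op_norm_nonneg: "0 \<le> op_norm M"
  using vec_l2_norm_mult_mat_vec_le_op_norm_unit[of "0\<^sub>v (dim_col M)" M]
  by (simp add: vec_l2_norm_def)

lemma vec_l2_norm_mult_mat_vec_le:
  assumes v: "v \<in> carrier_vec (dim_col M)"
  shows "vec_l2_norm (M *\<^sub>v v) \<le> op_norm M * vec_l2_norm v"
proof (cases "v = 0\<^sub>v (dim_col M)")
  case True
  then show ?thesis
    by (simp add: vec_l2_norm_def)
next
  case False
  then have pos: "0 < vec_l2_norm v"
    by (rule vec_l2_norm_pos[OF v])
  define a where "a = complex_of_real (1 / vec_l2_norm v)"
  have a: "cmod a = 1 / vec_l2_norm v"
    unfolding a_def using pos by (simp add: norm_divide)
  have "vec_l2_norm (M *\<^sub>v (a \<cdot>\<^sub>v v)) \<le> op_norm M"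
    using v pos by (intro vec_l2_norm_mult_mat_vec_le_op_norm_unit) (auto simp: vec_l2_norm_smult a)
  moreover have "M *\<^sub>v (a \<cdot>\<^sub>v v) = a \<cdot>\<^sub>v (M *\<^sub>v v)"
    using v by (intro mult_mat_vec) auto
  ultimately show ?thesis
    using pos by (simp add: vec_l2_norm_smult a field_simps)
qed

lemma one_le_op_norm_mult_right_inverse:
  assumes C: "C \<in> carrier_mat n n" and Cinv: "Cinv \<in> carrier_mat n n"
    and inv: "C * Cinv = 1\<^sub>m n" and n: "0 < n"
  shows "1 \<le> op_norm C * op_norm Cinv"
proof -
  let ?e = "unit_vec n 0 :: complex vec"
  have "1 = vec_l2_norm (C *\<^sub>v (Cinv *\<^sub>v ?e))"
    using C Cinv inv n by (simp add: assoc_mult_mat_vec[symmetric] vec_l2_norm_unit_vec)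
  also have "\<dots> \<le> op_norm C * vec_l2_norm (Cinv *\<^sub>v ?e)"
    using C Cinv by (intro vec_l2_norm_mult_mat_vec_le) auto
  also have "\<dots> \<le> op_norm C * (op_norm Cinv * vec_l2_norm ?e)"
    using Cinv by (intro mult_left_mono op_norm_nonneg vec_l2_norm_mult_mat_vec_le) auto
  finally show ?thesis
    using n by (simp add: vec_l2_norm_unit_vec)
qed

section \<open>Partial permutation matrices\<close>

lemma vec_l2_norm_mult_mat_vec_eq:
  fixes K :: "complex mat"
  assumes K: "K \<in> carrier_mat n m" and w: "w \<in> carrier_vec m"
    and row_supp: "\<And>i j j'. i < n \<Longrightarrow> j < m \<Longrightarrow> j' < m \<Longrightarrow>
      K $$ (i, j) \<noteq> 0 \<Longrightarrow> K $$ (i, j') \<noteq> 0 \<Longrightarrow> j = j'"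
    and unit_cols: "\<And>j. j < m \<Longrightarrow> w $ j \<noteq> 0 \<Longrightarrow> vec_l2_norm (col K j) = 1"
  shows "vec_l2_norm (K *\<^sub>v w) = vec_l2_norm w"
proof -
  have row: "(cmod ((K *\<^sub>v w) $ i))\<^sup>2 = (\<Sum>j<m. (cmod (K $$ (i, j)))\<^sup>2 * (cmod (w $ j))\<^sup>2)"
    if i: "i < n" for i
  proof -
    have Kw: "(K *\<^sub>v w) $ i = (\<Sum>j<m. K $$ (i, j) * w $ j)"
      using K w i by (simp add: scalar_prod_def lessThan_atLeast0)
    show ?thesis
    proof (cases "\<exists>j0<m. K $$ (i, j0) \<noteq> 0")
      case True
      then obtain j0 where j0: "j0 < m" "K $$ (i, j0) \<noteq> 0"
        by blast
      have others: "K $$ (i, j) = 0" if "j \<in> {..<m} - {j0}" for j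
        using row_supp[OF i _ j0(1)] j0(2) that by blast
      have "(K *\<^sub>v w) $ i = (\<Sum>j\<in>{j0}. K $$ (i, j) * w $ j)"
        unfolding Kw by (intro sum.mono_neutral_right) (use j0 others in auto)
      moreover have "(\<Sum>j<m. (cmod (K $$ (i, j)))\<^sup>2 * (cmod (w $ j))\<^sup>2)
          = (\<Sum>j\<in>{j0}. (cmod (K $$ (i, j)))\<^sup>2 * (cmod (w $ j))\<^sup>2)"
        by (intro sum.mono_neutral_right) (use j0 others in auto)
      ultimately show ?thesis
        by (simp add: norm_mult power_mult_distrib)
    next
      case False
      then show ?thesis
        unfolding Kw by simp
    qed
  qed
  have col: "(\<Sum>i<n. (cmod (K $$ (i, j)))\<^sup>2) = 1" if "j < m" "w $ j \<noteq> 0" for j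
    using unit_cols[OF that] K that unfolding vec_l2_norm_def by simp
  have "(\<Sum>i<n. (cmod ((K *\<^sub>v w) $ i))\<^sup>2)
      = (\<Sum>i<n. \<Sum>j<m. (cmod (K $$ (i, j)))\<^sup>2 * (cmod (w $ j))\<^sup>2)"
    by (simp add: row)
  also have "\<dots> = (\<Sum>j<m. (cmod (w $ j))\<^sup>2 * (\<Sum>i<n. (cmod (K $$ (i, j)))\<^sup>2))"
    by (subst sum.swap) (simp add: sum_distrib_left mult.commute)
  also have "\<dots> = (\<Sum>j<m. (cmod (w $ j))\<^sup>2)"
  proof (rule sum.cong)
    fix j
    assume "j \<in> {..<m}"
    then show "(cmod (w $ j))\<^sup>2 * (\<Sum>i<n. (cmod (K $$ (i, j)))\<^sup>2) = (cmod (w $ j))\<^sup>2"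
      by (cases "w $ j = 0") (simp_all add: col)
  qed simp
  finally show ?thesis
    using K w unfolding vec_l2_norm_def by simp
qed

definition partial_perm_mat :: "'a :: zero_neq_one mat \<Rightarrow> bool" where
  "partial_perm_mat K \<longleftrightarrow>
     (\<forall>i<dim_row K. \<forall>j<dim_col K. K $$ (i, j) \<in> {0, 1}) \<and>
     (\<forall>i<dim_row K. \<forall>j<dim_col K. \<forall>j'<dim_col K. K $$ (i, j) \<noteq> 0 \<longrightarrow> K $$ (i, j') \<noteq> 0 \<longrightarrow> j = j') \<and>
     (\<forall>i<dim_row K. \<forall>i'<dim_row K. \<forall>j<dim_col K. K $$ (i, j) \<noteq> 0 \<longrightarrow> K $$ (i', j) \<noteq> 0 \<longrightarrow> i = i')"

lemma partial_perm_mat_if_superdiagonal: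
  assumes K: "K \<in> carrier_mat n m" and "\<forall>i<n. \<forall>j<m. K $$ (i, j) \<in> {0, 1}"
    and supp: "\<And>i j. i < n \<Longrightarrow> j < m \<Longrightarrow> K $$ (i, j) \<noteq> 0 \<Longrightarrow> j = i + r"
  shows "partial_perm_mat K"
  using assms(2) K unfolding partial_perm_mat_def by (auto dest: supp) (metis add_right_cancel supp)

lemma partial_perm_matD:
  assumes "partial_perm_mat K" and "K \<in> carrier_mat n m"
  shows partial_perm_mat_entry: "\<And>i j. i < n \<Longrightarrow> j < m \<Longrightarrow> K $$ (i, j) \<in> {0, 1}"
    and partial_perm_mat_row_unique: "\<And>i j j'. i < n \<Longrightarrow> j < m \<Longrightarrow> j' < m \<Longrightarrow>
      K $$ (i, j) \<noteq> 0 \<Longrightarrow> K $$ (i, j') \<noteq> 0 \<Longrightarrow> j = j'"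
    and partial_perm_mat_col_unique: "\<And>i i' j. i < n \<Longrightarrow> i' < n \<Longrightarrow> j < m \<Longrightarrow>
      K $$ (i, j) \<noteq> 0 \<Longrightarrow> K $$ (i', j) \<noteq> 0 \<Longrightarrow> i = i'"
  using assms unfolding partial_perm_mat_def by auto

lemma partial_perm_mat_col_eq_unit_vec:
  assumes K: "K \<in> carrier_mat n m" "partial_perm_mat K"
    and j: "j < m" and nonzero: "col K j \<noteq> 0\<^sub>v n"
  obtains i where "i < n" "col K j = unit_vec n i"
proof -
  have "\<exists>i<n. K $$ (i, j) \<noteq> 0"
  proof (rule ccontr)
    assume "\<not> (\<exists>i<n. K $$ (i, j) \<noteq> 0)"
    then have "col K j = 0\<^sub>v n"
      using K(1) j by (intro eq_vecI) auto
    with nonzero show False ..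
  qed
  then obtain i where i: "i < n" "K $$ (i, j) \<noteq> 0"
    by blast
  have entries: "K $$ (i', j) = (if i' = i then 1 else 0)" if i': "i' < n" for i'
  proof (cases "i' = i")
    case True
    then show ?thesis
      using partial_perm_mat_entry[OF K(2,1) i(1) j] i(2) by auto
  next
    case False
    then show ?thesis
      using partial_perm_mat_col_unique[OF K(2,1) i(1) i' j i(2)] by auto
  qed
  then have "col K j = unit_vec n i"
    using K(1) i(1) j by (intro eq_vecI) (auto simp: entries)
  with i(1) show ?thesis by (rule that)
qed

section \<open>Rank and kernels\<close>

context vec_space
begin

lemma mult_mat_vec_in_span_cols:
  assumes Y: "Y \<in> carrier_mat n k" and x: "x \<in> carrier_vec k"
  shows "Y *\<^sub>v x \<in> span (set (cols Y))"
proof -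
  have cols: "set (cols Y) \<subseteq> carrier_vec n"
    using Y cols_dim by blast
  have "vec (length (cols Y)) (\<lambda>i. x $ i) = x"
    using Y x by auto
  then have "Y *\<^sub>v x = mat_of_cols n (cols Y) *\<^sub>v vec (length (cols Y)) (\<lambda>i. x $ i)"
    using Y mat_of_cols_cols[of Y] by auto
  also have "\<dots> = lincomb_list (\<lambda>i. x $ i) (cols Y)"
    using cols by (intro lincomb_list_as_mat_mult[symmetric]) auto
  also have "\<dots> \<in> span_list (cols Y)"
    by (intro in_span_listI) auto
  finally show ?thesis
    using span_list_as_span[OF cols] by simp
qed

lemma rank_mult_le_left:
  assumes Y: "Y \<in> carrier_mat n k" and X: "X \<in> carrier_mat k m"
  shows "rank (Y * X) \<le> rank Y"
proof -
  let ?W = "span (set (cols Y))"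
  have colsY: "set (cols Y) \<subseteq> carrier_vec n"
    using Y cols_dim by blast
  have YX: "Y * X \<in> carrier_mat n m"
    using Y X by simp
  have colsYX: "set (cols (Y * X)) \<subseteq> carrier_vec n"
    using YX cols_dim by blast
  have "set (cols (Y * X)) \<subseteq> ?W"
  proof
    fix v
    assume "v \<in> set (cols (Y * X))"
    then obtain j where j: "j < m" "v = col (Y * X) j"
      using YX by (metis carrier_matD(2) cols_length cols_nth in_set_conv_nth)
    then have "v = Y *\<^sub>v col X j"
      using col_mult2[OF Y X j(1)] by simp
    then show "v \<in> ?W"
      using X j(1) by (simp add: mult_mat_vec_in_span_cols[OF Y])
  qed
  then have "span (set (cols (Y * X))) \<subseteq> ?W"
    using colsY by (simp add: span_is_subset span_is_submodule)
  then have sub: "VectorSpace.subspace class_ring (span (set (cols (Y * X)))) (vs ?W)"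
    using colsY colsYX by (intro nested_subspaces span_is_subspace)
  have vsW: "vectorspace class_ring (vs ?W)"
    using span_is_subspace[OF colsY] by (rule subspace_is_vs)
  show ?thesis
    using vectorspace.subspace_dim[OF vsW sub fin_dim_span_cols[OF Y]] fin_dim_span_cols[OF YX]
    unfolding rank_def by simp
qed

lemma kernel_nontrivial_if_rank_less:
  assumes N: "N \<in> carrier_mat n m" and rk: "rank N < m"
  obtains c where "c \<in> carrier_vec m" "c \<noteq> 0\<^sub>v m" "N *\<^sub>v c = 0\<^sub>v n"
proof (cases "distinct (cols N)")
  case True
  then have "lin_dep (set (cols N))"
    using lin_indpt_full_rank[OF N True] rk by auto
  then show ?thesis
    using lin_depE[OF N _ True] that by blast
next
  case False
  then obtain i j where ij: "i < m" "j < m" "i \<noteq> j" "col N i = col N j"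
    using N by (auto simp: distinct_conv_nth)
  let ?c = "unit_vec m i - unit_vec m j :: 'a vec"
  have "?c $ i = 1"
    using ij by simp
  then have "?c \<noteq> 0\<^sub>v m"
    using ij(1) by (auto dest: arg_cong[where f = "\<lambda>v. v $ i"])
  moreover have "N *\<^sub>v ?c = 0\<^sub>v n"
  proof (rule eq_vecI)
    fix k
    assume "k < dim_vec (0\<^sub>v n :: 'a vec)"
    then have k: "k < n"
      by simp
    have "(N *\<^sub>v ?c) $ k = row N k \<bullet> unit_vec m i - row N k \<bullet> unit_vec m j"
      using N k by (simp add: scalar_prod_minus_distrib[of _ m])
    also have "\<dots> = N $$ (k, i) - N $$ (k, j)"
      using N k ij by simp
    also have "N $$ (k, i) = N $$ (k, j)"
      using arg_cong[OF ij(4), of "\<lambda>v. v $ k"] N k ij(1,2) by simp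
    finally show "(N *\<^sub>v ?c) $ k = 0\<^sub>v n $ k"
      using k by simp
  qed (use N in simp)
  ultimately show ?thesis
    by (intro that) auto
qed

lemma rank_le_card_nonzero_cols:
  assumes K: "K \<in> carrier_mat n m"
  shows "rank K \<le> card {j. j < m \<and> col K j \<noteq> 0\<^sub>v n}"
proof -
  obtain U where U: "maximal U (\<lambda>T. T \<subseteq> set (cols K) \<and> lin_indpt T)"
    using maximal_exists[of "\<lambda>T. T \<subseteq> set (cols K) \<and> lin_indpt T" "card (set (cols K))" "{}"]
    by (meson List.finite_set card_mono empty_iff empty_subsetI finite_lin_indpt2 rev_finite_subset)
  have U_cols: "U \<subseteq> set (cols K)" and li: "lin_indpt U"
    using U unfolding maximal_def by auto
  have "0\<^sub>v n \<notin> U"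
    using vs_zero_lin_dep[of U] U_cols cols_dim[of K] K li by auto
  then have "U \<subseteq> col K ` {j. j < m \<and> col K j \<noteq> 0\<^sub>v n}"
    using U_cols K by (force simp: in_set_conv_nth)
  then have "card U \<le> card (col K ` {j. j < m \<and> col K j \<noteq> 0\<^sub>v n})"
    by (intro card_mono) auto
  also have "\<dots> \<le> card {j. j < m \<and> col K j \<noteq> 0\<^sub>v n}"
    by (rule card_image_le) auto
  finally show ?thesis
    using rank_card_indpt[OF K U] by simp
qed

lemma supported_kernel_vec_exists:
  assumes Y: "Y \<in> carrier_mat n k" and X: "X \<in> carrier_mat k nc"
    and S: "S \<subseteq> {..<nc}" and rk: "rank Y < card S"
  obtains w where "w \<in> carrier_vec nc" "w \<noteq> 0\<^sub>v nc" "\<And>j. j < nc \<Longrightarrow> j \<notin> S \<Longrightarrow> w $ j = 0"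
    "Y *\<^sub>v (X *\<^sub>v w) = 0\<^sub>v n"
proof -
  define m where "m = card S"
  define js where "js = sorted_list_of_set S"
  have js: "distinct js" "length js = m" "set js = S"
    unfolding js_def m_def using finite_subset[OF S] by auto
  have js_less: "js ! l < nc" if "l < m" for l
    using js S that nth_mem by fastforce
  \<comment> \<open>P embeds \<open>'a^m\<close> as the coordinate subspace indexed by S, sending e_l to e_(js ! l)\<close>
  define P :: "'a mat" where "P = mat nc m (\<lambda>(i, l). if i = js ! l then 1 else 0)"
  have P: "P \<in> carrier_mat nc m"
    unfolding P_def by simp
  have YXP: "Y * (X * P) \<in> carrier_mat n m"
    using Y X P by simp
  have "rank (Y * (X * P)) < m"
    using rank_mult_le_left[OF Y, of "X * P" m] X P rk unfolding m_def by simp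
  then obtain c where c: "c \<in> carrier_vec m" "c \<noteq> 0\<^sub>v m" "Y * (X * P) *\<^sub>v c = 0\<^sub>v n"
    by (rule kernel_nontrivial_if_rank_less[OF YXP])
  define w where "w = P *\<^sub>v c"
  have w: "w \<in> carrier_vec nc"
    unfolding w_def using P c by simp
  have w_entry: "w $ i = (\<Sum>l<m. (if i = js ! l then 1 else 0) * c $ l)" if "i < nc" for i
    unfolding w_def P_def using that c(1) by (simp add: scalar_prod_def lessThan_atLeast0)
  have w_js: "w $ (js ! l) = c $ l" if l: "l < m" for l
  proof -
    have index: "js ! l = js ! l' \<longleftrightarrow> l' = l" if "l' < m" for l'
      using js l that nth_eq_iff_index_eq by metis
    have "w $ (js ! l) = (\<Sum>l'<m. if l' = l then c $ l' else 0)"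
      unfolding w_entry[OF js_less[OF l]] by (rule sum.cong) (auto simp: index)
    then show ?thesis
      using l by simp
  qed
  have w_outside: "w $ i = 0" if "i < nc" "i \<notin> S" for i
    using w_entry[OF that(1)] that(2) js by (auto intro!: sum.neutral)
  have "w \<noteq> 0\<^sub>v nc"
  proof
    assume "w = 0\<^sub>v nc"
    then have "c $ l = 0" if "l < m" for l
      using w_js[OF that] js_less[OF that] by simp
    with c(1,2) show False
      by (auto simp: vec_eq_iff)
  qed
  moreover have "Y *\<^sub>v (X *\<^sub>v w) = 0\<^sub>v n"
    using c(3) X P c(1) unfolding w_def
    by (simp add: assoc_mult_mat_vec[OF Y, of "X * P" m] assoc_mult_mat_vec[OF X P])
  ultimately show ?thesis
    using that w w_outside by blast
qed

end

lemma partial_perm_mat_isometric_kernel_vec_exists: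
  fixes K Y X :: "complex mat"
  assumes K: "K \<in> carrier_mat n m" "partial_perm_mat K"
    and Y: "Y \<in> carrier_mat n' k" and X: "X \<in> carrier_mat k m"
    and rk: "vec_space.rank n' Y < vec_space.rank n K"
  obtains w where "w \<in> carrier_vec m" "w \<noteq> 0\<^sub>v m" "Y *\<^sub>v (X *\<^sub>v w) = 0\<^sub>v n'"
    "vec_l2_norm (K *\<^sub>v w) = vec_l2_norm w"
proof -
  let ?S = "{j. j < m \<and> col K j \<noteq> 0\<^sub>v n}"
  have "vec_space.rank n K \<le> card ?S"
    by (rule vec_space.rank_le_card_nonzero_cols[OF K(1)])
  then obtain w where w: "w \<in> carrier_vec m" "w \<noteq> 0\<^sub>v m"
      "\<And>j. j < m \<Longrightarrow> j \<notin> ?S \<Longrightarrow> w $ j = 0" "Y *\<^sub>v (X *\<^sub>v w) = 0\<^sub>v n'"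
    using vec_space.supported_kernel_vec_exists[OF Y X, of ?S] rk by force
  have "vec_l2_norm (K *\<^sub>v w) = vec_l2_norm w"
  proof (rule vec_l2_norm_mult_mat_vec_eq[OF K(1) w(1)])
    show "j = j'" if "i < n" "j < m" "j' < m" "K $$ (i, j) \<noteq> 0" "K $$ (i, j') \<noteq> 0" for i j j'
      using partial_perm_mat_row_unique[OF K(2,1)] that by blast
    show "vec_l2_norm (col K j) = 1" if j: "j < m" "w $ j \<noteq> 0" for j
    proof -
      have "col K j \<noteq> 0\<^sub>v n"
        using w(3) j by blast
      then obtain i where "i < n" "col K j = unit_vec n i"
        using partial_perm_mat_col_eq_unit_vec[OF K j(1)] by blast
      then show ?thesis
        by (simp add: vec_l2_norm_unit_vec)
    qed
  qed
  with w that show ?thesis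
    by blast
qed

section \<open>Intertwining defect and rank\<close>

lemma intertwining_mult_mat_vec:
  fixes A B C :: "'a :: comm_ring mat"
  assumes "A \<in> carrier_mat n n" "B \<in> carrier_mat n n" "C \<in> carrier_mat n n" "v \<in> carrier_vec n"
  shows "(A * C - C * B) *\<^sub>v v = A *\<^sub>v (C *\<^sub>v v) - C *\<^sub>v (B *\<^sub>v v)"
  using assms by (simp add: minus_mult_distrib_mat_vec[of "A * C" n n] assoc_mult_mat_vec)

lemma one_le_op_norm_intertwining_mult_inverse:
  fixes A B C Cinv :: "complex mat"
  assumes A: "A \<in> carrier_mat n n" "partial_perm_mat A" and B: "B \<in> carrier_mat n n"
    and C: "C \<in> carrier_mat n n" and Cinv: "Cinv \<in> carrier_mat n n" and inv: "C * Cinv = 1\<^sub>m n"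
    and rk: "vec_space.rank n B < vec_space.rank n A"
  shows "1 \<le> op_norm (A * C - C * B) * op_norm Cinv"
proof -
  obtain w where w: "w \<in> carrier_vec n" "w \<noteq> 0\<^sub>v n" "B *\<^sub>v (Cinv *\<^sub>v w) = 0\<^sub>v n"
      "vec_l2_norm (A *\<^sub>v w) = vec_l2_norm w"
    by (rule partial_perm_mat_isometric_kernel_vec_exists[OF A B Cinv rk])
  let ?u = "Cinv *\<^sub>v w"
  have u: "?u \<in> carrier_vec n"
    using Cinv w(1) by simp
  have "C *\<^sub>v ?u = w"
    using C Cinv w(1) inv by (simp add: assoc_mult_mat_vec[symmetric])
  then have "(A * C - C * B) *\<^sub>v ?u = A *\<^sub>v w"
    using A B C u w(1,3) by (auto simp: intertwining_mult_mat_vec)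
  then have "vec_l2_norm w \<le> op_norm (A * C - C * B) * vec_l2_norm ?u"
    using vec_l2_norm_mult_mat_vec_le[of ?u "A * C - C * B"] A B C u w(4) by simp
  also have "\<dots> \<le> op_norm (A * C - C * B) * (op_norm Cinv * vec_l2_norm w)"
    using Cinv w(1) by (intro mult_left_mono op_norm_nonneg vec_l2_norm_mult_mat_vec_le) auto
  finally have "1 * vec_l2_norm w \<le> (op_norm (A * C - C * B) * op_norm Cinv) * vec_l2_norm w"
    by (simp add: mult.assoc)
  then show ?thesis
    using vec_l2_norm_pos[OF w(1,2)] by simp
qed

lemma one_le_op_norm_inverse_mult_intertwining:
  fixes A B C Cinv :: "complex mat"
  assumes A: "A \<in> carrier_mat n n" and B: "B \<in> carrier_mat n n" "partial_perm_mat B"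
    and C: "C \<in> carrier_mat n n" and Cinv: "Cinv \<in> carrier_mat n n" and inv: "Cinv * C = 1\<^sub>m n"
    and rk: "vec_space.rank n A < vec_space.rank n B"
  shows "1 \<le> op_norm Cinv * op_norm (A * C - C * B)"
proof -
  obtain w where w: "w \<in> carrier_vec n" "w \<noteq> 0\<^sub>v n" "A *\<^sub>v (C *\<^sub>v w) = 0\<^sub>v n"
      "vec_l2_norm (B *\<^sub>v w) = vec_l2_norm w"
    by (rule partial_perm_mat_isometric_kernel_vec_exists[OF B A C rk])
  let ?v = "C *\<^sub>v (B *\<^sub>v w)"
  have v: "?v \<in> carrier_vec n"
    using B C w(1) by simp
  have "(A * C - C * B) *\<^sub>v w = A *\<^sub>v (C *\<^sub>v w) - ?v"
    by (rule intertwining_mult_mat_vec[OF A B(1) C w(1)])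
  also have "\<dots> = - ?v"
    using w(3) v by simp
  finally have Dw: "vec_l2_norm ((A * C - C * B) *\<^sub>v w) = vec_l2_norm ?v"
    by (simp add: vec_l2_norm_uminus)
  have "Cinv *\<^sub>v ?v = (Cinv * C) *\<^sub>v (B *\<^sub>v w)"
    using B(1) w(1) by (simp add: assoc_mult_mat_vec[OF Cinv C])
  then have "vec_l2_norm w = vec_l2_norm (Cinv *\<^sub>v ?v)"
    using inv B(1) w(1,4) by simp
  also have "\<dots> \<le> op_norm Cinv * vec_l2_norm ((A * C - C * B) *\<^sub>v w)"
    using vec_l2_norm_mult_mat_vec_le[of ?v Cinv] Cinv v Dw by simp
  also have "\<dots> \<le> op_norm Cinv * (op_norm (A * C - C * B) * vec_l2_norm w)"
    using A B C w(1) by (intro mult_left_mono op_norm_nonneg vec_l2_norm_mult_mat_vec_le) auto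
  finally have "1 * vec_l2_norm w \<le> (op_norm Cinv * op_norm (A * C - C * B)) * vec_l2_norm w"
    by (simp add: mult.assoc)
  then show ?thesis
    using vec_l2_norm_pos[OF w(1,2)] by simp
qed

lemma rank_eq_if_op_norm_intertwining_small:
  fixes A B C Cinv :: "complex mat"
  assumes A: "A \<in> carrier_mat n n" "partial_perm_mat A" and B: "B \<in> carrier_mat n n" "partial_perm_mat B"
    and C: "C \<in> carrier_mat n n" and Cinv: "Cinv \<in> carrier_mat n n"
    and inv: "C * Cinv = 1\<^sub>m n" "Cinv * C = 1\<^sub>m n"
    and small: "op_norm (A * C - C * B) * op_norm Cinv < 1"
  shows "vec_space.rank n A = vec_space.rank n B"
proof (rule linorder_cases[of "vec_space.rank n A" "vec_space.rank n B"])
  assume "vec_space.rank n A < vec_space.rank n B"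
  then show ?thesis
    using one_le_op_norm_inverse_mult_intertwining[OF A(1) B C Cinv inv(2)] small
    by (simp add: mult.commute)
next
  assume "vec_space.rank n B < vec_space.rank n A"
  then show ?thesis
    using one_le_op_norm_intertwining_mult_inverse[OF A B(1) C Cinv inv(1)] small by simp
qed

lemma le_fact_mult_power:
  fixes x :: real
  assumes "1 \<le> x" and "0 < n"
  shows "x \<le> fact n * x ^ n"
proof -
  have "x \<le> x ^ n"
    using power_increasing[of 1 n x] assms by simp
  also have "\<dots> \<le> fact n * x ^ n"
    using mult_right_mono[OF fact_ge_1[of n], of "x ^ n"] assms(1) by simp
  finally show ?thesis .
qed

theorem lemma22:
  fixes A B C Cinv :: "complex mat" and n r :: nat and \<xi> \<epsilon> :: real
  assumes A: "A \<in> carrier_mat n n" and B: "B \<in> carrier_mat n n"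
    and C: "C \<in> carrier_mat n n" and Cinv: "Cinv \<in> carrier_mat n n"
    and A01: "\<forall>i<n. \<forall>j<n. A $$ (i, j) \<in> {0, 1}"
    and B01: "\<forall>i<n. \<forall>j<n. B $$ (i, j) \<in> {0, 1}"
    and r: "1 \<le> r" "r \<le> n - 1"
    and supp: "\<forall>i<n. \<forall>j<n. int j - int i \<noteq> int r \<longrightarrow> A $$ (i, j) = 0 \<and> B $$ (i, j) = 0"
    and xi: "\<xi> > 0"
    and inv: "C * Cinv = 1\<^sub>m n" "Cinv * C = 1\<^sub>m n"
    and nC: "op_norm C \<le> \<xi>" and nCinv: "op_norm Cinv \<le> \<xi>"
    and eps: "\<epsilon> = op_norm (A * C - C * B)"
    and small: "\<epsilon> < 1 / (fact n * \<xi> ^ n)"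
  shows "vec_space.rank n A = vec_space.rank n B"
proof -
  have superdiagonal: "j = i + r" if "i < n" "j < n" "A $$ (i, j) \<noteq> 0 \<or> B $$ (i, j) \<noteq> 0" for i j
    using supp that by (cases "j = i + r") auto
  have A_perm: "partial_perm_mat A" and B_perm: "partial_perm_mat B"
    using superdiagonal by (blast intro: partial_perm_mat_if_superdiagonal[OF A A01]
        partial_perm_mat_if_superdiagonal[OF B B01])+
  have n: "0 < n"
    using r by simp
  have "1 \<le> op_norm C * op_norm Cinv"
    by (rule one_le_op_norm_mult_right_inverse[OF C Cinv inv(1) n])
  also have "\<dots> \<le> \<xi>\<^sup>2"
    unfolding power2_eq_square using nC nCinv xi by (intro mult_mono op_norm_nonneg) auto
  finally have "1 \<le> \<xi>"
    using power2_le_imp_le[of 1 \<xi>] xi by simp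
  have "op_norm (A * C - C * B) * op_norm Cinv \<le> \<epsilon> * \<xi>"
    using eps nCinv by (simp add: mult_left_mono op_norm_nonneg)
  also have "\<dots> < \<xi> / (fact n * \<xi> ^ n)"
    using mult_strict_right_mono[OF small xi] by simp
  also have "\<dots> \<le> 1"
    using le_fact_mult_power[OF \<open>1 \<le> \<xi>\<close> n] xi by simp
  finally show ?thesis
    by (rule rank_eq_if_op_norm_intertwining_small[OF A A_perm B B_perm C Cinv inv])
qed

end
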